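(* Over undirected graphs, $\varphi_{\mathit{GadLin}}(x)$ is expressible by an ACR-GNN.
   Context: Undirected graphs are directed graphs $G=(V,E,\lambda)$ (finite $V$, loop-free $E$, $\lambda:V\to\{0,1\}^d$) with symmetric edge relation; $\{v,w\}$ denotes the pair of edges $(v,w),(w,v)$, and $N_G(v)$ is the neighbourhood of $v$. An ACR-GNN layer for undirected graphs is a triple $(\mathsf{agg},\mathsf{comb},\mathsf{read})$ where $\mathsf{agg}$ and $\mathsf{read}$ map multisets of vectors to vectors; it maps $\lambda$ to $\lambda'(v)=\mathsf{comb}\big(\lambda(v), \mathsf{agg}(\{\!\{\lambda(w)\}\!\}_{w\in N_G(v)}), \mathsf{read}(\{\!\{\lambda(w)\}\!\}_{w\in V})\big)$, where $\{\!\{\cdot\}\!\}$ denotes a multiset. An ACR-GNN classifier is a fixed number of layers followed by a classification function to truth values. The gadgetisation $\mathsf{gad}(G)$ of a directed graph $G=(V,E,\lambda)$ is the undirected graph of dimension 3 such that for each edge $(u,w)\in E$ it has nodes $v^1_u, v^2_{(u,w)}, v^3_{(u,w)}, v^1_w$, edges $\{v^1_u,v^2_{(u,w)}\}$, $\{v^2_{(u,w)},v^3_{(u,w)}\}$, $\{v^3_{(u,w)},v^1_w\}$, and labels $(1,0,0)$ for $v^1_u,v^1_w$, $(0,1,0)$ for $v^2_{(u,w)}$, $(0,0,1)$ for $v^3_{(u,w)}$. $\varphi_{\mathit{GadLin}}(x)$ is the node classifier accepting a node of a graph $G$ iff $G$ is isomorphic to $\mathsf{gad}(G')$ for some strict linear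 order $G'$. *)

theory Defs
  imports Complex_Main "HOL-Library.Multiset"
begin

text \<open>A (labelled) graph: a vertex set, an edge relation and a labelling
  assigning to each vertex a vector in {0,1}^d, represented as a boolean list.\<close>
record 'v graph =
  verts :: "'v set"
  edges :: "('v \<times> 'v) set"
  lab   :: "'v \<Rightarrow> bool list"

definition dgraph :: "nat \<Rightarrow> 'v graph \<Rightarrow> bool" where
  "dgraph d G \<longleftrightarrow> finite (verts G) \<and> edges G \<subseteq> verts G \<times> verts G
     \<and> (\<forall>v. (v, v) \<notin> edges G) \<and> (\<forall>v\<in>verts G. length (lab G v) = d)"

definition ugraph :: "nat \<Rightarrow> 'v graph \<Rightarrow> bool" where
  "ugraph d G \<longleftrightarrow> dgraph d G \<and> (\<forall>v w. (v, w) \<in> edges G \<longrightarrow> (w, v) \<in> edges G)"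

definition nbrs :: "'v graph \<Rightarrow> 'v \<Rightarrow> 'v set" where
  "nbrs G v = {w. (v, w) \<in> edges G}"

definition graph_iso :: "'v graph \<Rightarrow> 'w graph \<Rightarrow> bool" where
  "graph_iso G H \<longleftrightarrow> (\<exists>f. bij_betw f (verts G) (verts H)
     \<and> (\<forall>u\<in>verts G. \<forall>w\<in>verts G. (u, w) \<in> edges G \<longleftrightarrow> (f u, f w) \<in> edges H)
     \<and> (\<forall>v\<in>verts G. lab H (f v) = lab G v))"

definition strict_linear_order :: "'v graph \<Rightarrow> bool" where
  "strict_linear_order G \<longleftrightarrow> (\<exists>d. dgraph d G)
     \<and> (\<forall>u w x. (u, w) \<in> edges G \<longrightarrow> (w, x) \<in> edges G \<longrightarrow> (u, x) \<in> edges G)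
     \<and> (\<forall>u\<in>verts G. \<forall>w\<in>verts G. u \<noteq> w \<longrightarrow> (u, w) \<in> edges G \<or> (w, u) \<in> edges G)"

datatype 'v gnode = V1 'v | V2 'v 'v | V3 'v 'v

fun gad_lab :: "'v gnode \<Rightarrow> bool list" where
  "gad_lab (V1 _) = [True, False, False]"
| "gad_lab (V2 _ _) = [False, True, False]"
| "gad_lab (V3 _ _) = [False, False, True]"

definition gad :: "'v graph \<Rightarrow> 'v gnode graph" where
  "gad G = \<lparr> verts = (\<Union>(u, w)\<in>edges G. {V1 u, V2 u w, V3 u w, V1 w}),
             edges = (\<Union>(u, w)\<in>edges G.
                {(V1 u, V2 u w), (V2 u w, V1 u), (V2 u w, V3 u w), (V3 u w, V2 u w),
                 (V3 u w, V1 w), (V1 w, V3 u w)}),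
             lab = gad_lab \<rparr>"

text \<open>Vectors of reals are represented as lists (length = dimension);
  aggregation and readout are arbitrary functions on multisets of vectors.\<close>
record acr_layer =
  agg  :: "real list multiset \<Rightarrow> real list"
  comb :: "real list \<Rightarrow> real list \<Rightarrow> real list \<Rightarrow> real list"
  rd   :: "real list multiset \<Rightarrow> real list"

definition apply_layer :: "acr_layer \<Rightarrow> 'v graph \<Rightarrow> ('v \<Rightarrow> real list) \<Rightarrow> ('v \<Rightarrow> real list)" where
  "apply_layer L G x = (\<lambda>v. comb L (x v)
       (agg L (image_mset x (mset_set (nbrs G v))))
       (rd L (image_mset x (mset_set (verts G)))))"

record acr_classifier =
  layers :: "acr_layer list"
  dims   :: "nat list"
  cls    :: "real list \<Rightarrow> bool"

definition wf_classifier :: "nat \<Rightarrow> acr_classifier \<Rightarrow> bool" where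
  "wf_classifier d C \<longleftrightarrow> length (dims C) = Suc (length (layers C)) \<and> dims C ! 0 = d
     \<and> (\<forall>i < length (layers C). \<forall>x y z. length x = dims C ! i \<longrightarrow>
           length (comb (layers C ! i) x y z) = dims C ! Suc i)"

definition init_features :: "'v graph \<Rightarrow> 'v \<Rightarrow> real list" where
  "init_features G = (\<lambda>v. map (\<lambda>b. if b then 1 else 0) (lab G v))"

definition run_layers :: "acr_layer list \<Rightarrow> 'v graph \<Rightarrow> ('v \<Rightarrow> real list) \<Rightarrow> ('v \<Rightarrow> real list)" where
  "run_layers Ls G x = foldl (\<lambda>y L. apply_layer L G y) x Ls"

definition accepts :: "acr_classifier \<Rightarrow> 'v graph \<Rightarrow> 'v \<Rightarrow> bool" where
  "accepts C G v \<longleftrightarrow> cls C (run_layers (layers C) G (init_features G) v)"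

definition phi_GadLin :: "'v graph \<Rightarrow> 'v \<Rightarrow> bool" where
  "phi_GadLin G v \<longleftrightarrow> (\<exists>G' :: nat graph. strict_linear_order G' \<and> graph_iso G (gad G'))"

end

theory Submission
  imports Defs "HOL-Library.Countable"
begin

(*
  A GNN can run colour refinement: each round maps a node to a code of its old colour and the
  multiset of its neighbours' colours, and a natural number can encode any such pair.  After
  four rounds a readout accepts iff the multiset of colours equals that of gad G' for some strict
  linear order G'.  This is correct because colour refinement identifies every graph H on which
  it becomes discrete: if the round-k colouring of H is injective, any graph with the same
  round-(k+1) colour multiset is isomorphic to H.  Gadgets of strict linear orders are discrete
  after three rounds: a node v1_u is told apart by its number of (0,1,0)-neighbours, the
  out-degree of u, which is injective on a strict linear order; v2_(u,w) sees v1_u and v3_(u,w)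
  sees v1_w one round later, and one more round recovers the other endpoint.
*)

instance multiset :: (countable) countable
proof
  have "inj (\<lambda>M :: 'a multiset. sorted_list_of_multiset (image_mset to_nat M))"
    by (rule injI) (metis mset_sorted_list_of_multiset multiset.inj_map_strong to_nat_split)
  then show "\<exists>f :: 'a multiset \<Rightarrow> nat. inj f"
    using inj_compose[OF inj_to_nat] by blast
qed

lemma image_mset_mset_set_bij_betw:
  assumes "bij_betw f A B" "\<And>a. a \<in> A \<Longrightarrow> g (f a) = h a"
  shows "image_mset g (mset_set B) = image_mset h (mset_set A)"
proof -
  have "mset_set B = image_mset f (mset_set A)"
    using assms(1) by (simp add: bij_betw_def image_mset_mset_set)
  moreover have "a \<in> A" if "a \<in># mset_set A" for a
    using that by (cases "finite A") auto
  ultimately show ?thesis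
    using assms(2) by (auto simp: multiset.map_comp intro: image_mset_cong)
qed

lemma image_mset_mset_set_eq_obtains_bij_betw:
  assumes eq: "image_mset c (mset_set A) = image_mset d (mset_set B)"
    and "finite A" "finite B" and inj: "inj_on d B"
  obtains g where "bij_betw g A B" "\<And>a. a \<in> A \<Longrightarrow> d (g a) = c a"
proof
  have images: "c ` A = d ` B"
    using arg_cong[OF eq, of set_mset] \<open>finite A\<close> \<open>finite B\<close> by simp
  have "card (c ` A) = card A"
  proof -
    have "card (c ` A) = card B"
      using images inj by (simp add: card_image)
    also have "\<dots> = card A"
      using arg_cong[OF eq, of size] by simp
    finally show ?thesis .
  qed
  then have "bij_betw c A (d ` B)"
    using images \<open>finite A\<close> by (simp add: bij_betw_def inj_on_iff_eq_card)
  then show "bij_betw (inv_into B d \<circ> c) A B"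
    using bij_betw_trans bij_betw_inv_into inj inj_on_imp_bij_betw by blast
  show "d ((inv_into B d \<circ> c) a) = c a" if "a \<in> A" for a
    using that images by (metis comp_apply f_inv_into_f imageI)
qed

lemma count_image_mset_mset_set:
  assumes "finite A"
  shows "count (image_mset f (mset_set A)) a = card {x \<in> A. f x = a}"
proof -
  have "filter_mset (\<lambda>y. y = a) (image_mset f (mset_set A)) = image_mset f (mset_set {x \<in> A. f x = a})"
    using assms by (simp add: image_mset_filter_mset_swap[symmetric])
  then show ?thesis
    by (simp add: count_conv_size_mset)
qed

lemma pair_mset_eq_imp_eq: "{#a, b#} = {#a', b'#} \<Longrightarrow> a \<noteq> b' \<Longrightarrow> a = a' \<and> b = b'"
  by (auto simp: add_eq_conv_ex)

subsection \<open>Colour refinement\<close>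

lemma nbrs_subset_verts: "edges G \<subseteq> verts G \<times> verts G \<Longrightarrow> nbrs G v \<subseteq> verts G"
  by (auto simp: nbrs_def)

lemma finite_nbrs: "finite (verts G) \<Longrightarrow> edges G \<subseteq> verts G \<times> verts G \<Longrightarrow> finite (nbrs G v)"
  by (rule finite_subset[OF nbrs_subset_verts])

primrec wl_colour :: "nat \<Rightarrow> 'v graph \<Rightarrow> 'v \<Rightarrow> nat" where
  "wl_colour 0 G v = to_nat (lab G v)"
| "wl_colour (Suc k) G v =
     to_nat (wl_colour k G v, image_mset (wl_colour k G) (mset_set (nbrs G v)))"

definition colour_histogram :: "nat \<Rightarrow> 'v graph \<Rightarrow> nat multiset" where
  "colour_histogram k G = image_mset (wl_colour k G) (mset_set (verts G))"

lemma wl_colour_mono: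
  assumes "j \<le> k" "wl_colour k G x = wl_colour k H y"
  shows "wl_colour j G x = wl_colour j H y"
  using assms by (induction k) (auto simp: le_Suc_eq)

lemma wl_colour_lab_eq:
  "wl_colour k G x = wl_colour k H y \<Longrightarrow> lab G x = lab H y"
  using wl_colour_mono[of 0 k G x H y] by simp

lemma nbrs_graph_iso:
  assumes bij: "bij_betw f (verts G) (verts H)"
    and edges: "\<forall>u\<in>verts G. \<forall>w\<in>verts G. (u, w) \<in> edges G \<longleftrightarrow> (f u, f w) \<in> edges H"
    and G: "edges G \<subseteq> verts G \<times> verts G" and H: "edges H \<subseteq> verts H \<times> verts H"
    and v: "v \<in> verts G"
  shows "nbrs H (f v) = f ` nbrs G v"
proof (intro equalityI subsetI)
  fix h assume h: "h \<in> nbrs H (f v)"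
  then obtain w where "w \<in> verts G" "h = f w"
    using H bij by (auto simp: nbrs_def bij_betw_def)
  then show "h \<in> f ` nbrs G v"
    using h edges v by (auto simp: nbrs_def)
next
  fix h assume "h \<in> f ` nbrs G v"
  then obtain w where "(v, w) \<in> edges G" "h = f w"
    by (auto simp: nbrs_def)
  then show "h \<in> nbrs H (f v)"
    using edges v G by (auto simp: nbrs_def)
qed

lemma wl_colour_graph_iso:
  assumes bij: "bij_betw f (verts G) (verts H)"
    and edges: "\<forall>u\<in>verts G. \<forall>w\<in>verts G. (u, w) \<in> edges G \<longleftrightarrow> (f u, f w) \<in> edges H"
    and labels: "\<forall>v\<in>verts G. lab H (f v) = lab G v"
    and G: "edges G \<subseteq> verts G \<times> verts G" and H: "edges H \<subseteq> verts H \<times> verts H"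
  shows "v \<in> verts G \<Longrightarrow> wl_colour k H (f v) = wl_colour k G v"
proof (induction k arbitrary: v)
  case 0
  then show ?case using labels by simp
next
  case (Suc k)
  have "nbrs H (f v) = f ` nbrs G v"
    by (rule nbrs_graph_iso[OF bij edges G H Suc.prems])
  then have "bij_betw f (nbrs G v) (nbrs H (f v))"
    using bij nbrs_subset_verts[OF G] by (auto simp: bij_betw_def intro: inj_on_subset)
  then have "image_mset (wl_colour k H) (mset_set (nbrs H (f v))) =
             image_mset (wl_colour k G) (mset_set (nbrs G v))"
    using Suc.IH nbrs_subset_verts[OF G] by (blast intro: image_mset_mset_set_bij_betw)
  then show ?case
    using Suc by simp
qed

lemma colour_histogram_graph_iso:
  assumes "graph_iso G H" "edges G \<subseteq> verts G \<times> verts G" "edges H \<subseteq> verts H \<times> verts H"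
  shows "colour_histogram k G = colour_histogram k H"
proof -
  obtain f where f: "bij_betw f (verts G) (verts H)"
      "\<forall>u\<in>verts G. \<forall>w\<in>verts G. (u, w) \<in> edges G \<longleftrightarrow> (f u, f w) \<in> edges H"
      "\<forall>v\<in>verts G. lab H (f v) = lab G v"
    using assms(1) unfolding graph_iso_def by blast
  have "image_mset (wl_colour k H) (mset_set (verts H)) = image_mset (wl_colour k G) (mset_set (verts G))"
    by (rule image_mset_mset_set_bij_betw[OF f(1)]) (rule wl_colour_graph_iso[OF f assms(2,3)])
  then show ?thesis
    unfolding colour_histogram_def by simp
qed

lemma graph_iso_if_wl_colour_bij_betw:
  assumes bij: "bij_betw g (verts G) (verts H)"
    and colour: "\<And>v. v \<in> verts G \<Longrightarrow> wl_colour (Suc k) H (g v) = wl_colour (Suc k) G v"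
    and discrete: "inj_on (wl_colour k H) (verts H)"
    and "finite (verts G)" "finite (verts H)"
    and G: "edges G \<subseteq> verts G \<times> verts G" and H: "edges H \<subseteq> verts H \<times> verts H"
  shows "graph_iso G H"
proof -
  have colour_k: "wl_colour k H (g v) = wl_colour k G v" if "v \<in> verts G" for v
    using colour[OF that] by simp
  have nbrs: "nbrs H (g v) = g ` nbrs G v" if v: "v \<in> verts G" for v
  proof -
    have "image_mset (wl_colour k H) (mset_set (nbrs H (g v))) =
          image_mset (wl_colour k G) (mset_set (nbrs G v))"
      using colour[OF v] by simp
    from arg_cong[OF this, of set_mset]
    have "wl_colour k H ` nbrs H (g v) = wl_colour k G ` nbrs G v"
      using finite_nbrs[OF assms(4) G, of v] finite_nbrs[OF assms(5) H, of "g v"] by simp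
    also have "\<dots> = wl_colour k H ` g ` nbrs G v"
      unfolding image_image
      by (intro image_cong refl) (auto simp: colour_k dest: nbrs_subset_verts[OF G, THEN subsetD])
    finally have "wl_colour k H ` nbrs H (g v) = wl_colour k H ` g ` nbrs G v" .
    moreover have "g ` nbrs G v \<subseteq> verts H"
      using bij_betw_imp_surj_on[OF bij] nbrs_subset_verts[OF G] by blast
    ultimately show ?thesis
      using inj_on_image_eq_iff[OF discrete nbrs_subset_verts[OF H]] by simp
  qed
  have "(u, w) \<in> edges G \<longleftrightarrow> (g u, g w) \<in> edges H" if "u \<in> verts G" "w \<in> verts G" for u w
  proof -
    have "(u, w) \<in> edges G \<longleftrightarrow> g w \<in> g ` nbrs G u"
      using inj_on_image_mem_iff[OF bij_betw_imp_inj_on[OF bij] that(2) nbrs_subset_verts[OF G]]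
      by (simp add: nbrs_def)
    also have "\<dots> \<longleftrightarrow> g w \<in> nbrs H (g u)"
      by (simp add: nbrs[OF that(1)])
    finally show ?thesis
      by (simp add: nbrs_def)
  qed
  moreover have "lab H (g v) = lab G v" if "v \<in> verts G" for v
    by (rule wl_colour_lab_eq[OF colour[OF that]])
  ultimately show ?thesis
    using bij unfolding graph_iso_def by blast
qed

theorem graph_iso_iff_colour_histogram_eq:
  assumes discrete: "inj_on (wl_colour k H) (verts H)"
    and fin: "finite (verts G)" "finite (verts H)"
    and G: "edges G \<subseteq> verts G \<times> verts G" and H: "edges H \<subseteq> verts H \<times> verts H"
  shows "graph_iso G H \<longleftrightarrow> colour_histogram (Suc k) G = colour_histogram (Suc k) H"
proof
  assume "colour_histogram (Suc k) G = colour_histogram (Suc k) H"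
  then have eq: "image_mset (wl_colour (Suc k) G) (mset_set (verts G)) =
                 image_mset (wl_colour (Suc k) H) (mset_set (verts H))"
    unfolding colour_histogram_def .
  have discrete_Suc: "inj_on (wl_colour (Suc k) H) (verts H)"
    using discrete by (auto simp: inj_on_def)
  obtain g where "bij_betw g (verts G) (verts H)"
      "\<And>v. v \<in> verts G \<Longrightarrow> wl_colour (Suc k) H (g v) = wl_colour (Suc k) G v"
    using image_mset_mset_set_eq_obtains_bij_betw[OF eq fin discrete_Suc] by blast
  then show "graph_iso G H"
    by (rule graph_iso_if_wl_colour_bij_betw[OF _ _ discrete fin G H])
qed (rule colour_histogram_graph_iso[OF _ G H])

subsection \<open>Gadgets of strict linear orders\<close>

lemma strict_linear_order_edges_subset:
  "strict_linear_order G \<Longrightarrow> edges G \<subseteq> verts G \<times> verts G"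
  unfolding strict_linear_order_def dgraph_def by blast

lemma strict_linear_order_finite_verts:
  "strict_linear_order G \<Longrightarrow> finite (verts G)"
  unfolding strict_linear_order_def dgraph_def by blast

lemma strict_linear_order_finite_edges:
  assumes "strict_linear_order G"
  shows "finite (edges G)"
proof (rule finite_subset)
  show "edges G \<subseteq> verts G \<times> verts G"
    by (rule strict_linear_order_edges_subset[OF assms])
  show "finite (verts G \<times> verts G)"
    using strict_linear_order_finite_verts[OF assms] by simp
qed

lemma inj_on_card_nbrs_strict_linear_order:
  assumes "strict_linear_order G"
  shows "inj_on (\<lambda>v. card (nbrs G v)) (verts G)"
proof -
  obtain d where "dgraph d G"
    and trans: "\<And>u w x. (u, w) \<in> edges G \<Longrightarrow> (w, x) \<in> edges G \<Longrightarrow> (u, x) \<in> edges G"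
    and total: "\<And>u w. u \<in> verts G \<Longrightarrow> w \<in> verts G \<Longrightarrow> u \<noteq> w \<Longrightarrow>
                  (u, w) \<in> edges G \<or> (w, u) \<in> edges G"
    using assms unfolding strict_linear_order_def by blast
  then have irrefl: "(v, v) \<notin> edges G" for v
    by (simp add: dgraph_def)
  have smaller: "card (nbrs G y) < card (nbrs G x)" if "(x, y) \<in> edges G" for x y
  proof (rule psubset_card_mono)
    show "finite (nbrs G x)"
      using assms by (simp add: finite_nbrs strict_linear_order_edges_subset
          strict_linear_order_finite_verts)
    show "nbrs G y \<subset> nbrs G x"
      unfolding nbrs_def using that trans irrefl by blast
  qed
  show ?thesis
  proof (rule inj_onI, rule ccontr)
    fix x y assume xy: "x \<in> verts G" "y \<in> verts G" "card (nbrs G x) = card (nbrs G y)" "x \<noteq> y"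
    have "(x, y) \<in> edges G \<or> (y, x) \<in> edges G"
      by (rule total[OF xy(1,2,4)])
    then show False
      using smaller[of x y] smaller[of y x] xy(3) by auto
  qed
qed

lemma lab_gad [simp]: "lab (gad G) = gad_lab"
  by (simp add: gad_def)

lemma edges_gad_subset: "edges (gad G) \<subseteq> verts (gad G) \<times> verts (gad G)"
  unfolding gad_def by auto

lemma finite_verts_gad: "finite (edges G) \<Longrightarrow> finite (verts (gad G))"
  unfolding gad_def by auto

lemma V1_in_verts_gad [simp]:
  "V1 x \<in> verts (gad G) \<longleftrightarrow> (\<exists>w. (x, w) \<in> edges G) \<or> (\<exists>u. (u, x) \<in> edges G)"
  unfolding gad_def by auto

lemma V2_in_verts_gad [simp]: "V2 u w \<in> verts (gad G) \<longleftrightarrow> (u, w) \<in> edges G"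
  unfolding gad_def by auto

lemma V3_in_verts_gad [simp]: "V3 u w \<in> verts (gad G) \<longleftrightarrow> (u, w) \<in> edges G"
  unfolding gad_def by auto

lemma nbrs_gad_V1:
  "nbrs (gad G) (V1 x) = V2 x ` nbrs G x \<union> (\<lambda>u. V3 u x) ` {u. (u, x) \<in> edges G}"
  unfolding gad_def nbrs_def by auto

lemma nbrs_gad_V2: "(u, w) \<in> edges G \<Longrightarrow> nbrs (gad G) (V2 u w) = {V1 u, V3 u w}"
  unfolding gad_def nbrs_def by auto

lemma nbrs_gad_V3: "(u, w) \<in> edges G \<Longrightarrow> nbrs (gad G) (V3 u w) = {V2 u w, V1 w}"
  unfolding gad_def nbrs_def by auto

lemma wl_colour_gad_V1_eqD:
  assumes "strict_linear_order G" "V1 x \<in> verts (gad G)" "V1 y \<in> verts (gad G)"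
    and "wl_colour (Suc k) (gad G) (V1 x) = wl_colour (Suc k) (gad G) (V1 y)"
  shows "x = y"
proof -
  let ?c0 = "wl_colour 0 (gad G)"
  have fin: "finite (nbrs (gad G) v)" for v
    using finite_verts_gad[OF strict_linear_order_finite_edges[OF assms(1)]]
    by (rule finite_nbrs[OF _ edges_gad_subset])
  let ?v2 = "to_nat [False, True, False]"
  have "wl_colour (Suc 0) (gad G) (V1 x) = wl_colour (Suc 0) (gad G) (V1 y)"
    using wl_colour_mono[OF _ assms(4), of "Suc 0"] by simp
  then have nbrs_eq: "image_mset ?c0 (mset_set (nbrs (gad G) (V1 x))) =
                      image_mset ?c0 (mset_set (nbrs (gad G) (V1 y)))"
    by simp
  have count_V2: "count (image_mset ?c0 (mset_set (nbrs (gad G) (V1 v)))) ?v2 = card (nbrs G v)" for v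
  proof -
    have "{n \<in> nbrs (gad G) (V1 v). ?c0 n = ?v2} = V2 v ` nbrs G v"
      unfolding nbrs_gad_V1 by auto
    then show ?thesis
      by (simp add: count_image_mset_mset_set[OF fin] card_image inj_on_def)
  qed
  have "card (nbrs G x) = count (image_mset ?c0 (mset_set (nbrs (gad G) (V1 x)))) ?v2"
    by (rule count_V2[symmetric])
  also have "\<dots> = card (nbrs G y)"
    unfolding nbrs_eq by (rule count_V2)
  finally have "card (nbrs G x) = card (nbrs G y)" .
  moreover have "x \<in> verts G" "y \<in> verts G"
    using assms(2,3) strict_linear_order_edges_subset[OF assms(1)] by auto
  ultimately show ?thesis
    using inj_onD[OF inj_on_card_nbrs_strict_linear_order[OF assms(1)]] by simp
qed

lemma wl_colour_gad_V2_eqD: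
  assumes "(u, w) \<in> edges G" "(u', w') \<in> edges G"
    and "wl_colour (Suc k) (gad G) (V2 u w) = wl_colour (Suc k) (gad G) (V2 u' w')"
  shows "wl_colour k (gad G) (V1 u) = wl_colour k (gad G) (V1 u')
    \<and> wl_colour k (gad G) (V3 u w) = wl_colour k (gad G) (V3 u' w')"
proof (rule pair_mset_eq_imp_eq)
  show "{#wl_colour k (gad G) (V1 u), wl_colour k (gad G) (V3 u w)#} =
        {#wl_colour k (gad G) (V1 u'), wl_colour k (gad G) (V3 u' w')#}"
    using assms by (simp add: nbrs_gad_V2)
  show "wl_colour k (gad G) (V1 u) \<noteq> wl_colour k (gad G) (V3 u' w')"
  proof
    assume "wl_colour k (gad G) (V1 u) = wl_colour k (gad G) (V3 u' w')"
    from wl_colour_lab_eq[OF this] show False by simp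
  qed
qed

lemma wl_colour_gad_V3_eqD:
  assumes "(u, w) \<in> edges G" "(u', w') \<in> edges G"
    and "wl_colour (Suc k) (gad G) (V3 u w) = wl_colour (Suc k) (gad G) (V3 u' w')"
  shows "wl_colour k (gad G) (V2 u w) = wl_colour k (gad G) (V2 u' w')
    \<and> wl_colour k (gad G) (V1 w) = wl_colour k (gad G) (V1 w')"
proof (rule pair_mset_eq_imp_eq)
  show "{#wl_colour k (gad G) (V2 u w), wl_colour k (gad G) (V1 w)#} =
        {#wl_colour k (gad G) (V2 u' w'), wl_colour k (gad G) (V1 w')#}"
    using assms by (simp add: nbrs_gad_V3)
  show "wl_colour k (gad G) (V2 u w) \<noteq> wl_colour k (gad G) (V1 w')"
  proof
    assume "wl_colour k (gad G) (V2 u w) = wl_colour k (gad G) (V1 w')"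
    from wl_colour_lab_eq[OF this] show False by simp
  qed
qed

lemma inj_on_wl_colour_gad:
  assumes slo: "strict_linear_order G"
  shows "inj_on (wl_colour 3 (gad G)) (verts (gad G))"
proof (rule inj_onI)
  fix x y assume x: "x \<in> verts (gad G)" and y: "y \<in> verts (gad G)"
    and "wl_colour 3 (gad G) x = wl_colour 3 (gad G) y"
  then have eq: "wl_colour (Suc (Suc (Suc 0))) (gad G) x = wl_colour (Suc (Suc (Suc 0))) (gad G) y"
    by (simp only: numeral_3_eq_3)
  have lab: "gad_lab x = gad_lab y"
    using wl_colour_lab_eq[OF eq] by simp
  show "x = y"
  proof (cases x)
    case (V1 a)
    with lab obtain b where "y = V1 b"
      by (cases y) auto
    with V1 x y eq show ?thesis
      using wl_colour_gad_V1_eqD[OF slo] by blast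
  next
    case (V2 u w)
    with lab obtain u' w' where y_def: "y = V2 u' w'"
      by (cases y) auto
    have e: "(u, w) \<in> edges G" "(u', w') \<in> edges G"
      using x y V2 y_def by auto
    have V1: "wl_colour (Suc (Suc 0)) (gad G) (V1 u) = wl_colour (Suc (Suc 0)) (gad G) (V1 u')"
      and V3: "wl_colour (Suc (Suc 0)) (gad G) (V3 u w) = wl_colour (Suc (Suc 0)) (gad G) (V3 u' w')"
      using wl_colour_gad_V2_eqD[OF e eq[unfolded V2 y_def]] by blast+
    have "u = u'"
      using V1 by (intro wl_colour_gad_V1_eqD[OF slo, of u u' "Suc 0"]) (use e in auto)
    moreover have "w = w'"
      using wl_colour_gad_V3_eqD[OF e V3]
      by (intro wl_colour_gad_V1_eqD[OF slo, of w w' 0]) (use e in auto)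
    ultimately show ?thesis
      using V2 y_def by simp
  next
    case (V3 u w)
    with lab obtain u' w' where y_def: "y = V3 u' w'"
      by (cases y) auto
    have e: "(u, w) \<in> edges G" "(u', w') \<in> edges G"
      using x y V3 y_def by auto
    have V2: "wl_colour (Suc (Suc 0)) (gad G) (V2 u w) = wl_colour (Suc (Suc 0)) (gad G) (V2 u' w')"
      and V1: "wl_colour (Suc (Suc 0)) (gad G) (V1 w) = wl_colour (Suc (Suc 0)) (gad G) (V1 w')"
      using wl_colour_gad_V3_eqD[OF e eq[unfolded V3 y_def]] by blast+
    have "w = w'"
      using V1 by (intro wl_colour_gad_V1_eqD[OF slo, of w w' "Suc 0"]) (use e in auto)
    moreover have "u = u'"
      using wl_colour_gad_V2_eqD[OF e V2]
      by (intro wl_colour_gad_V1_eqD[OF slo, of u u' 0]) (use e in auto)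
    ultimately show ?thesis
      using V3 y_def by simp
  qed
qed

subsection \<open>Colour refinement by ACR-GNN layers\<close>

(* Layer 0 reads the 0/1 label vectors; every later layer reads a colour c stored as the
   one-element vector [real c]. *)
definition bits_code :: "real list \<Rightarrow> nat" where
  "bits_code x = to_nat (map (\<lambda>r. r = 1) x)"

definition scalar_code :: "real list \<Rightarrow> nat" where
  "scalar_code x = nat \<lfloor>hd x\<rfloor>"

lemma scalar_code_real [simp]: "scalar_code [real n] = n"
  by (simp add: scalar_code_def)

lemma bits_code_init_features: "bits_code (init_features G v) = wl_colour 0 G v"
  by (simp add: bits_code_def init_features_def comp_def)

definition refine_layer :: "(real list \<Rightarrow> nat) \<Rightarrow> acr_layer" where
  "refine_layer dec =
     \<lparr>agg = \<lambda>M. [real (to_nat (image_mset dec M))],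
      comb = \<lambda>x y z. [real (to_nat (dec x, from_nat (scalar_code y) :: nat multiset))],
      rd = \<lambda>M. []\<rparr>"

lemma apply_refine_layer:
  assumes "\<And>v. dec (x v) = wl_colour k G v"
  shows "apply_layer (refine_layer dec) G x = (\<lambda>v. [real (wl_colour (Suc k) G v)])"
proof
  fix v
  have "image_mset dec (image_mset x (mset_set (nbrs G v))) =
        image_mset (wl_colour k G) (mset_set (nbrs G v))"
    by (simp add: multiset.map_comp comp_def assms)
  then show "apply_layer (refine_layer dec) G x v = [real (wl_colour (Suc k) G v)]"
    by (simp add: apply_layer_def refine_layer_def assms)
qed

lemma run_refine_layers:
  "run_layers (replicate k (refine_layer scalar_code)) G (\<lambda>v. [real (wl_colour j G v)])
     = (\<lambda>v. [real (wl_colour (j + k) G v)])"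
proof (induction k arbitrary: j)
  case (Suc k)
  have "apply_layer (refine_layer scalar_code) G (\<lambda>v. [real (wl_colour j G v)])
          = (\<lambda>v. [real (wl_colour (Suc j) G v)])"
    by (rule apply_refine_layer) simp
  with Suc.IH[of "Suc j"] show ?case
    by (simp add: run_layers_def)
qed (simp add: run_layers_def)

definition readout_layer :: "(nat multiset \<Rightarrow> bool) \<Rightarrow> acr_layer" where
  "readout_layer P =
     \<lparr>agg = \<lambda>M. [], comb = \<lambda>x y z. [hd z],
      rd = \<lambda>M. [if P (image_mset scalar_code M) then 1 else 0]\<rparr>"

definition wl_classifier :: "nat \<Rightarrow> nat \<Rightarrow> (nat multiset \<Rightarrow> bool) \<Rightarrow> acr_classifier" where
  "wl_classifier d k P =
     \<lparr>layers = refine_layer bits_code # replicate k (refine_layer scalar_code) @ [readout_layer P],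
      dims = d # replicate (Suc (Suc k)) 1,
      cls = \<lambda>x. x = [1]\<rparr>"

lemma wf_wl_classifier: "wf_classifier d (wl_classifier d k P)"
proof -
  have "length (comb (layers (wl_classifier d k P) ! i) x y z) = 1"
    if "i < Suc (Suc k)" for i x y z
    using that by (cases i) (auto simp: wl_classifier_def refine_layer_def readout_layer_def nth_append)
  then show ?thesis
    by (auto simp: wf_classifier_def wl_classifier_def nth_Cons' simp del: replicate.simps)
qed

lemma accepts_wl_classifier:
  "accepts (wl_classifier d k P) G v \<longleftrightarrow> P (colour_histogram (Suc k) G)"
proof -
  let ?refine = "refine_layer bits_code # replicate k (refine_layer scalar_code)"
  have "apply_layer (refine_layer bits_code) G (init_features G) = (\<lambda>v. [real (wl_colour (Suc 0) G v)])"
    by (rule apply_refine_layer) (rule bits_code_init_features)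
  then have "run_layers ?refine G (init_features G) = (\<lambda>v. [real (wl_colour (Suc k) G v)])"
    using run_refine_layers[of k G "Suc 0"] by (simp add: run_layers_def)
  moreover have "run_layers (?refine @ [readout_layer P]) G (init_features G)
      = apply_layer (readout_layer P) G (run_layers ?refine G (init_features G))"
    by (simp add: run_layers_def)
  ultimately show ?thesis
    by (simp add: accepts_def wl_classifier_def apply_layer_def readout_layer_def
        colour_histogram_def multiset.map_comp comp_def del: wl_colour.simps)
qed

theorem theorem5:
  shows "\<exists>C. wf_classifier 3 C \<and>
    (\<forall>G :: nat graph. ugraph 3 G \<longrightarrow>
       (\<forall>v\<in>verts G. accepts C G v \<longleftrightarrow> phi_GadLin G v))"
proof (intro exI conjI allI impI ballI)
  define gad_lin :: "nat multiset \<Rightarrow> bool" where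
    "gad_lin M \<longleftrightarrow> (\<exists>G' :: nat graph. strict_linear_order G' \<and> M = colour_histogram 4 (gad G'))" for M
  show "wf_classifier 3 (wl_classifier 3 3 gad_lin)"
    by (rule wf_wl_classifier)
  fix G :: "nat graph" and v assume "ugraph 3 G"
  then have G: "finite (verts G)" "edges G \<subseteq> verts G \<times> verts G"
    unfolding ugraph_def dgraph_def by auto
  have "graph_iso G (gad G') \<longleftrightarrow> colour_histogram 4 G = colour_histogram 4 (gad G')"
    if "strict_linear_order G'" for G' :: "nat graph"
    using graph_iso_iff_colour_histogram_eq[OF inj_on_wl_colour_gad[OF that] G(1) _ G(2) edges_gad_subset]
      finite_verts_gad[OF strict_linear_order_finite_edges[OF that]] by simp
  then show "accepts (wl_classifier 3 3 gad_lin) G v \<longleftrightarrow> phi_GadLin G v"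
    unfolding accepts_wl_classifier phi_GadLin_def gad_lin_def by auto
qed

end
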